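(* Let $g>0$, $p_0<p_1<0$, $[\![\rho]\!]<0$, $\Gamma_{\mathrm{rel}}>0$, and let $Q(\lambda)=\dfrac{2g[\![\rho]\!](p_1-p_0)}{\lambda}+\Gamma_{\mathrm{rel}}^2-\lambda^2$ for $\lambda>0$. For each integer $n\ge1$ such that $$\frac{g[\![\rho]\!]}{n}-\Gamma_{\mathrm{rel}}^2\coth\Big(\frac{np_1}{\Gamma_{\mathrm{rel}}}\Big)<0,$$ $Q$ is an invertible function of $\lambda$ in a neighborhood of $\lambda_n^*$, where $\lambda_n^*>0$ is the unique solution of $\frac{g[\![\rho]\!]}{n}=\Gamma_{\mathrm{rel}}^2\coth(\frac{np_1}{\Gamma_{\mathrm{rel}}})-\lambda^2\coth(\frac{n(p_1-p_0)}{\lambda})$.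
   Context: $[\![\rho]\!]=\rho_{\mathrm{air}}-\rho_{\mathrm{water}}<0$ is the density jump across the air–water interface, $g$ the gravitational constant; $Q(\lambda)$ is the Bernoulli-type constant of the laminar irrotational two-layer flow with water-region parameter $\lambda$ and air relative circulation $\Gamma_{\mathrm{rel}}$. *)

theory Defs
  imports "HOL-Analysis.Analysis"
begin

definition coth :: "real \<Rightarrow> real" where
  "coth x = cosh x / sinh x"

text \<open>Bernoulli-type constant Q(lambda); rho denotes the density jump [[rho]].\<close>
definition Qfun :: "real \<Rightarrow> real \<Rightarrow> real \<Rightarrow> real \<Rightarrow> real \<Rightarrow> real \<Rightarrow> real" where
  "Qfun g rho p0 p1 Grel lam = 2 * g * rho * (p1 - p0) / lam + Grel^2 - lam^2"

definition lam_eq :: "real \<Rightarrow> real \<Rightarrow> real \<Rightarrow> real \<Rightarrow> real \<Rightarrow> nat \<Rightarrow> real \<Rightarrow> bool" where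
  "lam_eq g rho p0 p1 Grel n lam \<longleftrightarrow>
     g * rho / real n = Grel^2 * coth (real n * p1 / Grel) - lam^2 * coth (real n * (p1 - p0) / lam)"

end

theory Submission
  imports Defs
begin

text \<open>With \<open>d = n (p\<^sub>1 - p\<^sub>0)\<close>, the right-hand side of the defining equation of \<open>\<lambda>\<^sub>n\<^sup>*\<close>
  involves \<open>h(\<lambda>) = \<lambda>\<^sup>2 coth (d/\<lambda>)\<close>, which increases strictly from \<open>0\<close> to \<open>\<infinity>\<close>; since
  \<open>coth\<close> is negative at the negative argument \<open>n p\<^sub>1 / \<Gamma>\<^sub>r\<^sub>e\<^sub>l\<close>, the equation reads \<open>h(\<lambda>) = C\<close>
  for a constant \<open>0 < C < K/d\<close>, where \<open>K = -g[[\<rho>]](p\<^sub>1 - p\<^sub>0)\<close>. Hence \<open>\<lambda>\<^sub>n\<^sup>*\<close> exists and is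
  unique. From \<open>coth x > 1/x\<close> we get \<open>h(\<lambda>) > \<lambda>\<^sup>3/d\<close>, so \<open>(\<lambda>\<^sub>n\<^sup>*)\<^sup>3 < K\<close>. Finally
  \<open>Q(\<lambda>) = -2K/\<lambda> - \<lambda>\<^sup>2 + \<Gamma>\<^sub>r\<^sub>e\<^sub>l\<^sup>2\<close> has \<open>Q'(\<lambda>) = 2(K - \<lambda>\<^sup>3)/\<lambda>\<^sup>2\<close>, so it is strictly
  increasing on \<open>(0, K\<^sup>1\<^sup>/\<^sup>3)\<close>, a neighbourhood of \<open>\<lambda>\<^sub>n\<^sup>*\<close>.\<close>

lemma coth_eq_exp: "t \<noteq> 0 \<Longrightarrow> coth t = 1 + 2 / (exp (2 * t) - 1)"
proof -
  assume "t \<noteq> 0"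
  then have "exp t * exp t \<noteq> 1"
    by (simp add: exp_add[symmetric] mult_2[symmetric])
  moreover have "exp (2 * t) = exp t * exp t"
    by (metis exp_add mult_2)
  ultimately show ?thesis
    by (simp add: coth_def sinh_field_def cosh_field_def exp_minus field_simps)
qed

lemma coth_pos: "t > 0 \<Longrightarrow> coth t > 0"
  by (simp add: coth_def)

lemma coth_neg: "t < 0 \<Longrightarrow> coth t < 0"
  by (simp add: coth_def divide_pos_neg)

lemma coth_le_one_plus_inverse: "t > 0 \<Longrightarrow> coth t \<le> 1 + 1 / t"
proof -
  assume t: "t > 0"
  have "1 + 2 * t \<le> exp (2 * t)"
    using exp_ge_add_one_self[of "2 * t"] by simp
  then have "2 / (exp (2 * t) - 1) \<le> 1 / t"
    using t by (simp add: field_simps)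
  then show ?thesis
    using coth_eq_exp[of t] t by simp
qed

lemma coth_strict_antimono: "0 < a \<Longrightarrow> a < t \<Longrightarrow> coth t < coth a"
proof -
  assume "0 < a" "a < t"
  then have "exp (2 * a) < exp (2 * t)" "1 < exp (2 * a)"
    by simp_all
  then have "2 / (exp (2 * t) - 1) < 2 / (exp (2 * a) - 1)"
    by (simp add: divide_strict_left_mono)
  then show ?thesis
    using coth_eq_exp[of t] coth_eq_exp[of a] \<open>0 < a\<close> \<open>a < t\<close> by simp
qed

text \<open>The derivative of \<open>x cosh x - sinh x\<close> is \<open>x sinh x > 0\<close>.\<close>
lemma sinh_less_mult_cosh: "(t::real) > 0 \<Longrightarrow> sinh t < t * cosh t"
proof -
  assume t: "t > 0"
  have "\<And>x. DERIV (\<lambda>x. x * cosh x - sinh x) x :> x * sinh x"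
    by (auto intro!: derivative_eq_intros)
  then obtain z where z: "0 < z" "t * cosh t - sinh t = t * (z * sinh z)"
    using MVT2[of 0 t "\<lambda>x. x * cosh x - sinh x" "\<lambda>x. x * sinh x"] t by auto
  then have "t * (z * sinh z) > 0"
    using t by simp
  then show ?thesis
    using z(2) by simp
qed

lemma coth_gt_inverse: "t > 0 \<Longrightarrow> 1 / t < coth t"
  using sinh_less_mult_cosh[of t] by (simp add: coth_def field_simps)

definition sq_coth :: "real \<Rightarrow> real \<Rightarrow> real" where
  "sq_coth d l = l\<^sup>2 * coth (d / l)"

lemma sq_coth_strict_mono:
  assumes "d > 0" "0 < x" "x < y"
  shows "sq_coth d x < sq_coth d y"
proof -
  have "coth (d / x) < coth (d / y)"
    using assms coth_strict_antimono[of "d / y" "d / x"] by (simp add: divide_strict_left_mono)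
  moreover have "x\<^sup>2 < y\<^sup>2"
    using assms by (simp add: power_strict_mono)
  moreover have "coth (d / x) > 0"
    using assms coth_pos by simp
  ultimately have "x\<^sup>2 * coth (d / x) < y\<^sup>2 * coth (d / y)"
    by (meson less_trans mult_strict_left_mono mult_strict_right_mono zero_less_power assms(2))
  then show ?thesis
    by (simp add: sq_coth_def)
qed

lemma sq_coth_continuous_on:
  "d > 0 \<Longrightarrow> 0 < lo \<Longrightarrow> continuous_on {lo..hi} (sq_coth d)"
  unfolding sq_coth_def coth_def by (auto intro!: continuous_intros)

lemma sq_coth_gt_cube: "d > 0 \<Longrightarrow> l > 0 \<Longrightarrow> l ^ 3 / d < sq_coth d l"
  using coth_gt_inverse[of "d / l"] mult_strict_left_mono[of "l / d" "coth (d / l)" "l\<^sup>2"]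
  by (simp add: sq_coth_def power3_eq_cube power2_eq_square)

lemma sq_coth_le: "d > 0 \<Longrightarrow> l > 0 \<Longrightarrow> sq_coth d l \<le> l\<^sup>2 + l ^ 3 / d"
proof -
  assume "d > 0" "l > 0"
  then have "l\<^sup>2 * coth (d / l) \<le> l\<^sup>2 * (1 + l / d)"
    using coth_le_one_plus_inverse[of "d / l"] by (intro mult_left_mono) simp_all
  then show ?thesis
    by (simp add: sq_coth_def power3_eq_cube power2_eq_square distrib_left)
qed

lemma sq_coth_eq_ex1:
  assumes d: "d > 0" and C: "C > 0"
  shows "\<exists>!l. l > 0 \<and> sq_coth d l = C"
proof -
  define lo where "lo = min 1 (C / (2 * (1 + 1 / d)))"
  define hi where "hi = max 1 (C * d)"
  have q: "1 + 1 / d > 0"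
    using d by (simp add: add_pos_pos)
  then have lo: "0 < lo" "lo \<le> 1"
    using C by (simp_all add: lo_def)
  have "lo * (1 + 1 / d) \<le> C / (2 * (1 + 1 / d)) * (1 + 1 / d)"
    using q by (intro mult_right_mono) (simp_all add: lo_def)
  also have "\<dots> = C / 2"
    using q by (simp add: field_simps)
  finally have lo_small: "lo * (1 + 1 / d) \<le> C / 2" .
  have "sq_coth d lo \<le> lo\<^sup>2 + lo ^ 3 / d"
    using sq_coth_le[OF d lo(1)] .
  also have "\<dots> \<le> lo + lo / d"
    using lo d power_decreasing[of 1 2 lo] power_decreasing[of 1 3 lo]
    by (intro add_mono divide_right_mono) simp_all
  also have "\<dots> = lo * (1 + 1 / d)"
    by (simp add: algebra_simps)
  finally have below: "sq_coth d lo \<le> C"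
    using lo_small C by linarith
  have "hi \<le> hi ^ 3"
    using power_increasing[of 1 3 hi] by (simp add: hi_def)
  then have "C \<le> hi ^ 3 / d"
    using d by (simp add: hi_def pos_le_divide_eq)
  then have above: "C \<le> sq_coth d hi"
    using sq_coth_gt_cube[OF d, of hi] by (simp add: hi_def less_max_iff_disj)
  obtain l where l: "lo \<le> l" "sq_coth d l = C"
    using IVT'[of "sq_coth d" lo C hi] below above sq_coth_continuous_on[OF d lo(1)] lo(2)
    by (force simp: hi_def)
  moreover have "m = l" if "m > 0" "sq_coth d m = C" for m
    using sq_coth_strict_mono[OF d] that l lo(1)
    by (metis less_le_trans linorder_neqE_linordered_idom order_less_irrefl)
  ultimately show ?thesis
    using lo(1) by (intro ex1I[of _ l]) auto
qed

lemma lam_eq_iff_sq_coth: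
  "lam_eq g rho p0 p1 Grel n l \<longleftrightarrow>
     sq_coth (real n * (p1 - p0)) l = Grel\<^sup>2 * coth (real n * p1 / Grel) - g * rho / real n"
  by (auto simp: lam_eq_def sq_coth_def)

lemma Qfun_strict_mono_on:
  "strict_mono_on {0<..<root 3 (- g * rho * (p1 - p0))} (Qfun g rho p0 p1 Grel)"
proof (rule strict_mono_onI)
  define K where "K = - g * rho * (p1 - p0)"
  fix x y
  assume "x \<in> {0<..<root 3 (- g * rho * (p1 - p0))}" "y \<in> {0<..<root 3 (- g * rho * (p1 - p0))}"
    and xy: "x < y"
  then have x: "0 < x" and y: "y < root 3 K"
    by (auto simp: K_def)
  then have "K > 0"
    using xy by (metis less_trans real_root_gt_0_iff zero_less_numeral)
  then have "y ^ 3 < K"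
    using y x xy power_strict_mono[of y "root 3 K" 3] by simp
  then have "x * y * (x + y) < 2 * K"
    using x xy mult_strict_mono[of "x * y" "y * y" "x + y" "y + y"]
    by (simp add: power3_eq_cube algebra_simps)
  moreover have "Qfun g rho p0 p1 Grel y - Qfun g rho p0 p1 Grel x
      = (y - x) * (2 * K - x * y * (x + y)) / (x * y)"
    using x xy by (simp add: Qfun_def K_def field_simps power2_eq_square)
  ultimately show "Qfun g rho p0 p1 Grel x < Qfun g rho p0 p1 Grel y"
    using x xy by (smt (verit) divide_pos_pos mult_pos_pos)
qed

theorem lemma3p4:
  fixes g rho p0 p1 Grel :: real and n :: nat
  assumes "g > 0" and "p0 < p1" and "p1 < 0" and "rho < 0" and "Grel > 0"
    and "n \<ge> 1"
    and "g * rho / real n - Grel^2 * coth (real n * p1 / Grel) < 0"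
  shows "\<exists>lam. lam > 0 \<and> lam_eq g rho p0 p1 Grel n lam
           \<and> (\<forall>mu. mu > 0 \<and> lam_eq g rho p0 p1 Grel n mu \<longrightarrow> mu = lam)
           \<and> (\<exists>e>0. e \<le> lam \<and> inj_on (Qfun g rho p0 p1 Grel) (ball lam e))"
proof -
  define d where "d = real n * (p1 - p0)"
  define C where "C = Grel\<^sup>2 * coth (real n * p1 / Grel) - g * rho / real n"
  define K where "K = - g * rho * (p1 - p0)"
  have d: "d > 0" and C: "C > 0"
    using assms by (simp_all add: d_def C_def)
  obtain lam where lam: "lam > 0" "sq_coth d lam = C"
    and unique: "\<And>mu. mu > 0 \<Longrightarrow> sq_coth d mu = C \<Longrightarrow> mu = lam"
    using sq_coth_eq_ex1[OF d C] by metis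
  have "coth (real n * p1 / Grel) < 0"
    using assms by (intro coth_neg) (simp add: divide_neg_pos mult_pos_neg)
  then have "C < K / d"
    using assms by (simp add: C_def K_def d_def field_simps mult_pos_neg)
  then have "lam ^ 3 < K"
    using sq_coth_gt_cube[OF d lam(1)] lam(2) d by (smt (verit) divide_strict_right_mono)
  then have "lam < root 3 K"
    using lam(1) real_root_power_cancel[of 3 lam] real_root_less_mono[of 3 "lam ^ 3" K] by simp
  define e where "e = min lam (root 3 K - lam)"
  have "ball lam e \<subseteq> {0<..<root 3 K}"
    by (auto simp: e_def dist_real_def)
  then have "inj_on (Qfun g rho p0 p1 Grel) (ball lam e)"
    using Qfun_strict_mono_on strict_mono_on_imp_inj_on inj_on_subset unfolding K_def by metis
  moreover have "e > 0" "e \<le> lam"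
    using lam(1) \<open>lam < root 3 K\<close> by (simp_all add: e_def)
  ultimately show ?thesis
    using lam unique unfolding lam_eq_iff_sq_coth d_def[symmetric] C_def[symmetric] by blast
qed

end
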